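(* Let $\mathcal S\subset\mathbb Z^2$ be a finite step set with weights $(\omega_s)_{s\in\mathcal S}$, let $t_c>0$, and let $\rho>0$ be irrational. Let $q:\mathbb N^2\times\mathbb N\to\mathbb C$, $(x,n)\mapsto q(x;n)$, extended by $q(y;n)=0$ for $y\notin\mathbb N^2$, satisfy $$q(x;n+1)=\sum_{s\in\mathcal S}\omega_s\,q(x-s;n)\qquad\text{for all }x\in\mathbb N^2,\ n\ge0,$$ and suppose there are functions $v_{k,\ell,m}:\mathbb N^2\to\mathbb C$ (integers $k\ge1$, $\ell\ge m\ge0$) such that for every $p>0$ and every $x\in\mathbb N^2$, $$q(x;n)=t_c^{-n}\sum_{\substack{k\ge1,\ \ell\ge m\ge0\\ k\rho+\ell+1<p}}v_{k,\ell,m}(x)\frac{(\log n)^m}{n^{k\rho+\ell+1}}+\mathcal O\!\left(t_c^{-n}\left(\frac{\log n}{n}\right)^p\right)\quad(n\to\infty).$$ Then each $v_{k,\ell,m}$ is $t_c$-polyharmonic of order $\ell-m+1$, i.e. $\Delta^{\ell-m+1}v_{k,\ell,m}\equiv0$ on $\mathbb N^2$.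
   Context: $\Delta$ acts on functions $w:\mathbb N^2\to\mathbb C$ by $(\Delta w)(A)=\sum_{s\in\mathcal S}\omega_s\,w(A-s)-t_c^{-1}w(A)$ for $A\in\mathbb N^2$, with the convention $w(B)=0$ for $B\notin\mathbb N^2$; $\Delta^r$ is the $r$-fold iterate of this operator. *)

theory Defs
  imports "HOL-Analysis.Analysis" "HOL-Library.Landau_Symbols"
begin

definition zext :: "(nat \<times> nat \<Rightarrow> 'a::zero) \<Rightarrow> int \<times> int \<Rightarrow> 'a" where
  "zext w y = (if fst y \<ge> 0 \<and> snd y \<ge> 0 then w (nat (fst y), nat (snd y)) else 0)"

definition Delta :: "(int \<times> int) set \<Rightarrow> (int \<times> int \<Rightarrow> real) \<Rightarrow> real
    \<Rightarrow> (nat \<times> nat \<Rightarrow> complex) \<Rightarrow> nat \<times> nat \<Rightarrow> complex" where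
  "Delta S \<omega> tc w A =
     (\<Sum>s\<in>S. complex_of_real (\<omega> s) * zext w (int (fst A) - fst s, int (snd A) - snd s))
     - complex_of_real (1 / tc) * w A"

end

theory Submission
  imports Defs "HOL-Real_Asymp.Real_Asymp"
begin

(* Rescaling by t_c^n turns the recurrence into Q(x;n+1) - Q(x;n) = t_c (Delta Q(.;n))(x).
   Insert the expansion of Q on both sides and Taylor-expand every scale function
   (log n)^m / n^a at n + 1: the result is an expansion of a negligible sequence, so all its
   coefficients vanish. Since rho is irrational, the coefficient of (log n)^m / n^(k rho + l + 1)
   receives contributions only from t_c Delta v_{k,l,m} and from Taylor terms of v_{k,l',m'}
   with l' < l and m' >= m. Thus Delta v_{k,l,m} is a combination of v's with smaller l - m,
   and induction on l - m gives Delta^(l-m+1) v_{k,l,m} = 0. *)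

section \<open>Negligible sequences\<close>

definition negligible :: "real \<Rightarrow> (nat \<Rightarrow> complex) \<Rightarrow> bool" where
  "negligible p h \<longleftrightarrow> h \<in> O(\<lambda>n. of_real ((ln (real n) / real n) powr p))"

lemma negligible_of_real:
  "(f :: nat \<Rightarrow> real) \<in> O(\<lambda>n. (ln (real n) / real n) powr p) \<Longrightarrow> negligible p (\<lambda>n. of_real (f n))"
  unfolding negligible_def by (simp add: landau_o.big.of_real_iff)

lemma negligible_add: "negligible p f \<Longrightarrow> negligible p g \<Longrightarrow> negligible p (\<lambda>n. f n + g n)"
  and negligible_diff: "negligible p f \<Longrightarrow> negligible p g \<Longrightarrow> negligible p (\<lambda>n. f n - g n)"
  unfolding negligible_def by (fact sum_in_bigo)+

lemma negligible_cmult: "negligible p f \<Longrightarrow> negligible p (\<lambda>n. c * f n)"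
  unfolding negligible_def by simp

lemma negligible_sum:
  "(\<And>a. a \<in> A \<Longrightarrow> negligible p (h a)) \<Longrightarrow> negligible p (\<lambda>n. \<Sum>a\<in>A. h a n)"
  unfolding negligible_def by (fact big_sum_in_bigo)

lemma negligible_Suc:
  assumes "p > 0" "negligible p f"
  shows "negligible p (\<lambda>n. f (Suc n))"
proof -
  have "(\<lambda>n. f (Suc n)) \<in> O(\<lambda>n. of_real ((ln (real (Suc n)) / real (Suc n)) powr p))"
    using assms(2) filterlim_Suc unfolding negligible_def by (rule landau_o.big.compose)
  also have "(\<lambda>n::nat. (ln (real (Suc n)) / real (Suc n)) powr p) \<in> O(\<lambda>n. (ln (real n) / real n) powr p)"
    using \<open>p > 0\<close> by real_asymp
  then have "(\<lambda>n. complex_of_real ((ln (real (Suc n)) / real (Suc n)) powr p))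
      \<in> O(\<lambda>n. of_real ((ln (real n) / real n) powr p))"
    by (simp add: landau_o.big.of_real_iff)
  finally show ?thesis unfolding negligible_def .
qed

lemma zext_sum:
  fixes c :: "'u \<Rightarrow> 'a::comm_ring_1"
  shows "zext (\<lambda>y. \<Sum>u\<in>U. c u * g u y) A = (\<Sum>u\<in>U. c u * zext (g u) A)"
  unfolding zext_def by auto

lemma Delta_sum:
  "Delta S \<omega> tc (\<lambda>y. \<Sum>u\<in>U. c u * g u y) = (\<lambda>A. \<Sum>u\<in>U. c u * Delta S \<omega> tc (g u) A)"
  unfolding Delta_def zext_sum
  by (simp add: sum_distrib_left sum_subtractf algebra_simps sum.swap[of _ S U])

lemma zext_add:
  fixes f g :: "nat \<times> nat \<Rightarrow> 'a::monoid_add"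
  shows "zext (\<lambda>y. f y + g y) A = zext f A + zext g A"
  unfolding zext_def by simp

lemma Delta_add: "Delta S \<omega> tc (\<lambda>y. f y + g y) A = Delta S \<omega> tc f A + Delta S \<omega> tc g A"
  unfolding Delta_def zext_add by (simp add: sum.distrib algebra_simps)

lemma negligible_zext: "(\<And>y. negligible p (R y)) \<Longrightarrow> negligible p (\<lambda>n. zext (\<lambda>y. R y n) A)"
  unfolding zext_def by (cases "0 \<le> fst A \<and> 0 \<le> snd A") (auto simp: negligible_def)

lemma negligible_Delta:
  assumes "finite S" "\<And>y. negligible p (R y)"
  shows "negligible p (\<lambda>n. Delta S \<omega> tc (\<lambda>y. R y n) A)"
  unfolding Delta_def by (intro negligible_diff negligible_sum negligible_cmult negligible_zext assms)

lemma funpow_Delta_sum: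
  "(Delta S \<omega> tc ^^ d) (\<lambda>y. \<Sum>u\<in>U. c u * g u y) = (\<lambda>A. \<Sum>u\<in>U. c u * (Delta S \<omega> tc ^^ d) (g u) A)"
  by (induction d) (simp_all add: Delta_sum)

lemma funpow_Delta_zero: "(Delta S \<omega> tc ^^ d) (\<lambda>_. 0) = (\<lambda>_. 0)"
  using funpow_Delta_sum[where U = "{}"] by simp

lemma funpow_Delta_eq_0_by_descent:
  assumes lower_order: "\<And>l m. m \<le> l \<Longrightarrow> \<exists>(U::'u set) c L M. finite U
      \<and> (\<forall>u\<in>U. M u \<le> L u \<and> L u - M u < l - m)
      \<and> Delta S \<omega> tc (v l m) = (\<lambda>x. \<Sum>u\<in>U. c u * v (L u) (M u) x)"
  shows "m \<le> l \<Longrightarrow> (Delta S \<omega> tc ^^ (l - m + 1)) (v l m) = (\<lambda>_. 0)"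
proof (induction "l - m" arbitrary: l m rule: less_induct)
  case less
  from lower_order[OF less.prems] obtain U c L M where "finite (U::'u set)"
    and UL: "\<forall>u\<in>U. M u \<le> L u \<and> L u - M u < l - m"
    and D: "Delta S \<omega> tc (v l m) = (\<lambda>x. \<Sum>u\<in>U. c u * v (L u) (M u) x)" by blast
  have vanish: "(Delta S \<omega> tc ^^ (l - m)) (v (L u) (M u)) = (\<lambda>_. 0)" if "u \<in> U" for u
  proof -
    from that UL have lt: "L u - M u < l - m" and le: "M u \<le> L u" by auto
    then have "l - m = (l - m - (L u - M u + 1)) + (L u - M u + 1)" by simp
    then have "(Delta S \<omega> tc ^^ (l - m)) (v (L u) (M u))
       = (Delta S \<omega> tc ^^ (l - m - (L u - M u + 1))) ((Delta S \<omega> tc ^^ (L u - M u + 1)) (v (L u) (M u)))"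
      by (metis comp_apply funpow_add)
    also have "\<dots> = (\<lambda>_. 0)" by (simp only: less.hyps[OF lt le] funpow_Delta_zero)
    finally show ?thesis .
  qed
  have "(Delta S \<omega> tc ^^ (l - m + 1)) (v l m) = (Delta S \<omega> tc ^^ (l - m)) (Delta S \<omega> tc (v l m))"
    by (simp add: funpow_Suc_right del: funpow.simps)
  also have "\<dots> = (\<lambda>A. \<Sum>u\<in>U. c u * (Delta S \<omega> tc ^^ (l - m)) (v (L u) (M u)) A)"
    unfolding D funpow_Delta_sum ..
  also have "\<dots> = (\<lambda>_. 0)" by (simp add: vanish)
  finally show ?case .
qed

section \<open>Uniqueness of expansions in powers of n and log n\<close>

definition log_power :: "real \<Rightarrow> nat \<Rightarrow> real \<Rightarrow> real" where
  "log_power a j t = ln t ^ j / t powr a"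

lemma log_power_ratio_tendsto_0:
  assumes "b < b' \<or> (b' = b \<and> j' < j)"
  shows "((\<lambda>n::nat. real n powr b / ln (real n) ^ j * log_power b' j' (real n)) \<longlongrightarrow> 0) at_top"
proof (cases "b < b'")
  case True
  then show ?thesis unfolding log_power_def by real_asymp
next
  case False
  with assms have "b' = b" "j' < j" by auto
  then show ?thesis unfolding log_power_def by real_asymp
qed

lemma negligible_expansion_exponent_ge:
  fixes Z :: "(real \<times> nat) set" and C :: "real \<times> nat \<Rightarrow> complex"
  assumes fin: "finite Z" and nz: "\<And>g. g \<in> Z \<Longrightarrow> C g \<noteq> 0"
    and neg: "negligible p (\<lambda>n. \<Sum>g\<in>Z. C g * of_real (log_power (fst g) (snd g) (real n)))"
    and "g \<in> Z"
  shows "p \<le> fst g"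
proof (rule ccontr)
  assume "\<not> p \<le> fst g"
  define b where "b = Min (fst ` Z)"
  define j where "j = Max (snd ` {g\<in>Z. fst g = b})"
  have "b \<in> fst ` Z" unfolding b_def using fin \<open>g \<in> Z\<close> by (intro Min_in) auto
  have b_le: "b \<le> fst g'" if "g' \<in> Z" for g' unfolding b_def using fin that by (intro Min_le) auto
  have "b < p" using b_le[OF \<open>g \<in> Z\<close>] \<open>\<not> p \<le> fst g\<close> by simp
  have "j \<in> snd ` {g\<in>Z. fst g = b}" unfolding j_def using fin \<open>b \<in> fst ` Z\<close> by (intro Max_in) auto
  then have bj: "(b, j) \<in> Z" by auto
  have j_ge: "snd g' \<le> j" if "g' \<in> Z" "fst g' = b" for g'
    unfolding j_def using fin that by (intro Max_ge) auto
  define w where "w n = real n powr b / ln (real n) ^ j" for n :: nat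
  \<comment> \<open>Rescaled by \<open>w\<close>, the sum tends to the coefficient of its dominant term \<open>(b, j)\<close>,
    while the bound by \<open>(ln n / n) powr p\<close> forces the limit \<open>0\<close>.\<close>
  define h where "h n = (\<Sum>g\<in>Z. C g * of_real (log_power (fst g) (snd g) (real n)))" for n
  obtain c where c: "eventually (\<lambda>n. norm (h n) \<le> c * (ln (real n) / real n) powr p) at_top"
    using neg unfolding negligible_def h_def by (elim landau_o.bigE) auto
  have "((\<lambda>n. \<Sum>g\<in>Z. C g * of_real (w n * log_power (fst g) (snd g) (real n)))
      \<longlongrightarrow> (\<Sum>g\<in>Z. C g * of_real (if g = (b, j) then 1 else 0))) at_top"
  proof (intro tendsto_intros)
    fix g assume "g \<in> Z"
    show "((\<lambda>n. w n * log_power (fst g) (snd g) (real n)) \<longlongrightarrow> (if g = (b, j) then 1 else 0)) at_top"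
    proof (cases "g = (b, j)")
      case True
      have "eventually (\<lambda>n. w n * log_power (fst g) (snd g) (real n) = 1) at_top"
        using eventually_ge_at_top[of 2] by eventually_elim (simp add: True w_def log_power_def)
      then show ?thesis using True by (simp add: tendsto_eventually)
    next
      case False
      with b_le[OF \<open>g \<in> Z\<close>] j_ge[OF \<open>g \<in> Z\<close>] have "b < fst g \<or> (fst g = b \<and> snd g < j)"
        by (cases g) force
      then have "((\<lambda>n. w n * log_power (fst g) (snd g) (real n)) \<longlongrightarrow> 0) at_top"
        unfolding w_def by (rule log_power_ratio_tendsto_0)
      then show ?thesis using False by simp
    qed
  qed
  also have "(\<Sum>g\<in>Z. C g * of_real (if g = (b, j) then 1 else 0)) = C (b, j)"
    using fin bj by (simp add: if_distrib cong: if_cong)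
  also have "(\<lambda>n. \<Sum>g\<in>Z. C g * of_real (w n * log_power (fst g) (snd g) (real n))) = (\<lambda>n. of_real (w n) * h n)"
    unfolding h_def by (simp add: sum_distrib_left mult_ac)
  finally have "((\<lambda>n. of_real (w n) * h n) \<longlongrightarrow> C (b, j)) at_top" .
  moreover have "((\<lambda>n. of_real (w n) * h n) \<longlongrightarrow> 0) at_top"
  proof (rule Lim_null_comparison)
    show "eventually (\<lambda>n. norm (of_real (w n) * h n) \<le> c * (w n * (ln (real n) / real n) powr p)) at_top"
      using c eventually_ge_at_top[of 2]
    proof eventually_elim
      case (elim n)
      then have "w n \<ge> 0" unfolding w_def by simp
      with elim(1) have "w n * norm (h n) \<le> w n * (c * (ln (real n) / real n) powr p)"
        by (intro mult_left_mono)
      with \<open>w n \<ge> 0\<close> show ?case by (simp add: norm_mult mult.left_commute)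
    qed
    show "((\<lambda>n. c * (w n * (ln (real n) / real n) powr p)) \<longlongrightarrow> 0) at_top"
      unfolding w_def using \<open>b < p\<close> by (intro tendsto_mult_right_zero) real_asymp
  qed
  ultimately have "C (b, j) = 0" by (rule LIMSEQ_unique)
  with nz[OF bj] show False by simp
qed

lemma negligible_expansion_coeff_eq_0:
  fixes T :: "'u set" and c :: "'u \<Rightarrow> complex" and b :: "'u \<Rightarrow> real" and j :: "'u \<Rightarrow> nat"
  assumes fin: "finite T"
    and neg: "negligible p (\<lambda>n. \<Sum>u\<in>T. c u * of_real (log_power (b u) (j u) (real n)))"
    and "b0 < p"
  shows "(\<Sum>u\<in>{u\<in>T. b u = b0 \<and> j u = j0}. c u) = 0"
proof (rule ccontr)
  define C where "C g = (\<Sum>u\<in>{u\<in>T. (b u, j u) = g}. c u)" for g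
  define Z where "Z = {g\<in>(\<lambda>u. (b u, j u)) ` T. C g \<noteq> 0}"
  assume "(\<Sum>u\<in>{u\<in>T. b u = b0 \<and> j u = j0}. c u) \<noteq> 0"
  then have "C (b0, j0) \<noteq> 0" unfolding C_def by simp
  then have "(b0, j0) \<in> Z" unfolding Z_def C_def by (force intro: sum.neutral)
  have "(\<Sum>u\<in>T. c u * of_real (log_power (b u) (j u) (real n)))
      = (\<Sum>g\<in>(\<lambda>u. (b u, j u)) ` T. \<Sum>u\<in>{u\<in>T. (b u, j u) = g}. c u * of_real (log_power (b u) (j u) (real n)))" for n
    by (rule sum.group[symmetric]) (use fin in auto)
  also have "\<dots> n = (\<Sum>g\<in>(\<lambda>u. (b u, j u)) ` T. C g * of_real (log_power (fst g) (snd g) (real n)))" for n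
    unfolding C_def sum_distrib_right by (intro sum.cong refl) auto
  also have "\<dots> n = (\<Sum>g\<in>Z. C g * of_real (log_power (fst g) (snd g) (real n)))" for n
    unfolding Z_def using fin by (intro sum.mono_neutral_right) auto
  finally have neg_Z: "negligible p (\<lambda>n. \<Sum>g\<in>Z. C g * of_real (log_power (fst g) (snd g) (real n)))"
    using neg by (simp only:)
  have "finite Z" unfolding Z_def using fin by simp
  have "p \<le> fst (b0, j0)"
    by (rule negligible_expansion_exponent_ge[OF \<open>finite Z\<close> _ neg_Z \<open>(b0, j0) \<in> Z\<close>]) (simp add: Z_def)
  with \<open>b0 < p\<close> show False by simp
qed

lemma negligible_expansion_coeff_eq_0_Plus:
  fixes A :: "'u set" and B :: "'w set"
  assumes "finite A" "finite B"
    and "negligible p (\<lambda>n. (\<Sum>u\<in>A. c1 u * of_real (log_power (b1 u) (j1 u) (real n)))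
                           + (\<Sum>u\<in>B. c2 u * of_real (log_power (b2 u) (j2 u) (real n))))"
    and "b0 < p"
  shows "(\<Sum>u\<in>{u\<in>A. b1 u = b0 \<and> j1 u = j0}. c1 u) + (\<Sum>u\<in>{u\<in>B. b2 u = b0 \<and> j2 u = j0}. c2 u) = 0"
proof -
  have "(\<Sum>u\<in>{u\<in>A <+> B. case_sum b1 b2 u = b0 \<and> case_sum j1 j2 u = j0}. case_sum c1 c2 u) = 0"
    using assms
    by (intro negligible_expansion_coeff_eq_0[where b = "case_sum b1 b2" and j = "case_sum j1 j2"])
      (simp_all add: sum.Plus comp_def)
  moreover have "{u\<in>A <+> B. case_sum b1 b2 u = b0 \<and> case_sum j1 j2 u = j0}
      = {u\<in>A. b1 u = b0 \<and> j1 u = j0} <+> {u\<in>B. b2 u = b0 \<and> j2 u = j0}"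
    by auto
  ultimately show ?thesis using assms(1,2) by (simp add: sum.Plus comp_def)
qed

section \<open>Taylor expansion of the scale functions\<close>

text \<open>The recursion comes from differentiating
  \<open>(ln t)\<^sup>j / t powr c\<close> to \<open>(j (ln t)\<^bsup>j-1\<^esup> - c (ln t)\<^sup>j) / t powr (c + 1)\<close>.\<close>

fun log_power_deriv_coeff :: "real \<Rightarrow> nat \<Rightarrow> nat \<Rightarrow> nat \<Rightarrow> real" where
  "log_power_deriv_coeff a m 0 j = (if j = m then 1 else 0)"
| "log_power_deriv_coeff a m (Suc i) j =
     (if j < m then real (Suc j) * log_power_deriv_coeff a m i (Suc j) else 0)
     - (a + real i) * log_power_deriv_coeff a m i j"

definition log_power_deriv :: "real \<Rightarrow> nat \<Rightarrow> nat \<Rightarrow> real \<Rightarrow> real" where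
  "log_power_deriv a m i t = (\<Sum>j\<le>m. log_power_deriv_coeff a m i j * log_power (a + real i) j t)"

lemma log_power_deriv_0: "log_power_deriv a m 0 = log_power a m"
proof
  fix t
  have "log_power_deriv a m 0 t = (\<Sum>j\<le>m. if j = m then log_power a j t else 0)"
    unfolding log_power_deriv_def by (intro sum.cong) auto
  then show "log_power_deriv a m 0 t = log_power a m t" by simp
qed

lemma has_real_derivative_log_power:
  assumes "t > 0"
  shows "(log_power c j has_real_derivative
           real j * log_power (c + 1) (j - 1) t - c * log_power (c + 1) j t) (at t)"
proof -
  have log_power_eq: "log_power c' j' = (\<lambda>t. ln t ^ j' * t powr (- c'))" for c' j'
    by (simp add: fun_eq_iff log_power_def powr_minus divide_inverse)
  define E where "E = t powr (- (c + 1))"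
  have "t powr (- c) = t * E" "t powr (- c - 1) = E"
    unfolding E_def using assms powr_add[of t 1 "- (c + 1)"] by simp_all
  moreover have "((\<lambda>t. ln t ^ j * t powr (- c)) has_real_derivative
      real j * ln t ^ (j - 1) * (1 / t) * t powr (- c) + ln t ^ j * (- c * t powr (- c - 1))) (at t)"
    using assms by (intro derivative_eq_intros DERIV_ln_divide has_real_derivative_powr refl) auto
  ultimately show ?thesis
    using assms unfolding log_power_eq E_def[symmetric] by (simp add: algebra_simps)
qed

lemma sum_atMost_of_nat_times_pred:
  fixes e g :: "nat \<Rightarrow> 'a::comm_semiring_1"
  shows "(\<Sum>j\<le>m. e j * (of_nat j * g (j - 1))) = (\<Sum>j\<le>m. (if j < m then of_nat (Suc j) * e (Suc j) else 0) * g j)"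
proof (cases m)
  case (Suc k)
  have "(\<Sum>j\<le>Suc k. e j * (of_nat j * g (j - 1))) = (\<Sum>j\<le>k. e (Suc j) * (of_nat (Suc j) * g j))"
    by (subst sum.atMost_Suc_shift) simp
  also have "\<dots> = (\<Sum>j\<le>Suc k. (if j < Suc k then of_nat (Suc j) * e (Suc j) else 0) * g j)"
    by (subst sum.atMost_Suc) (simp add: mult_ac)
  finally show ?thesis using Suc by simp
qed simp

lemma has_real_derivative_log_power_deriv:
  assumes "t > 0"
  shows "(log_power_deriv a m i has_real_derivative log_power_deriv a m (Suc i) t) (at t)"
proof -
  define c where "c = a + real i"
  have "(log_power_deriv a m i has_real_derivative
      (\<Sum>j\<le>m. log_power_deriv_coeff a m i j * (real j * log_power (c + 1) (j - 1) t - c * log_power (c + 1) j t))) (at t)"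
    unfolding log_power_deriv_def c_def[symmetric]
    by (intro DERIV_sum DERIV_cmult has_real_derivative_log_power assms)
  moreover have "(\<Sum>j\<le>m. log_power_deriv_coeff a m i j * (real j * log_power (c + 1) (j - 1) t - c * log_power (c + 1) j t))
      = (\<Sum>j\<le>m. log_power_deriv_coeff a m i j * (real j * log_power (c + 1) (j - 1) t))
      - (\<Sum>j\<le>m. c * log_power_deriv_coeff a m i j * log_power (c + 1) j t)"
    by (simp only: right_diff_distrib sum_subtractf) (simp add: mult.assoc mult.left_commute)
  moreover have "\<dots> = log_power_deriv a m (Suc i) t"
    unfolding sum_atMost_of_nat_times_pred[where g = "\<lambda>j. log_power (c + 1) j t"]
      log_power_deriv_def sum_subtractf[symmetric]
    by (intro sum.cong) (simp_all add: c_def algebra_simps)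
  ultimately show ?thesis by simp
qed

lemma log_power_Suc_taylor:
  assumes "x \<ge> 1" "N > 0"
  obtains \<xi> where "x < \<xi>" "\<xi> < x + 1"
    "log_power a m (x + 1) - log_power a m x
       = (\<Sum>i\<in>{1..<N}. log_power_deriv a m i x / fact i) + log_power_deriv a m N \<xi> / fact N"
proof -
  have "\<exists>\<xi>. (if x + 1 < x then x + 1 < \<xi> \<and> \<xi> < x else x < \<xi> \<and> \<xi> < x + 1) \<and>
      log_power_deriv a m 0 (x + 1) = (\<Sum>i<N. log_power_deriv a m i x / fact i * (x + 1 - x) ^ i)
        + log_power_deriv a m N \<xi> / fact N * (x + 1 - x) ^ N"
    using assms
    by (intro Taylor[of N "log_power_deriv a m" "log_power_deriv a m 0" x "x + 1" x "x + 1"])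
      (auto intro!: has_real_derivative_log_power_deriv)
  moreover have "(\<Sum>i<N. log_power_deriv a m i x / fact i)
      = log_power a m x + (\<Sum>i\<in>{1..<N}. log_power_deriv a m i x / fact i)"
    using \<open>N > 0\<close> by (simp add: lessThan_atLeast0 sum.atLeast_Suc_lessThan log_power_deriv_0)
  ultimately show ?thesis
    using that by (auto simp: log_power_deriv_0)
qed

lemma abs_log_power_deriv_le:
  assumes "1 \<le> x" "x \<le> \<xi>" "\<xi> \<le> x + 1" "a + real N \<ge> 0"
  shows "\<bar>log_power_deriv a m N \<xi>\<bar>
    \<le> (\<Sum>j\<le>m. \<bar>log_power_deriv_coeff a m N j\<bar> * (ln (x + 1) ^ j / x powr (a + real N)))"
  unfolding log_power_deriv_def
proof (rule order.trans[OF sum_abs sum_mono])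
  fix j
  have "ln \<xi> \<ge> 0" "ln \<xi> \<le> ln (x + 1)" "x powr (a + real N) \<le> \<xi> powr (a + real N)"
    using assms by (auto intro: powr_mono2)
  then have "log_power (a + real N) j \<xi> \<le> ln (x + 1) ^ j / x powr (a + real N)"
    unfolding log_power_def using assms by (intro frac_le power_mono) auto
  moreover have "log_power (a + real N) j \<xi> \<ge> 0"
    unfolding log_power_def using \<open>ln \<xi> \<ge> 0\<close> by simp
  ultimately show "\<bar>log_power_deriv_coeff a m N j * log_power (a + real N) j \<xi>\<bar>
      \<le> \<bar>log_power_deriv_coeff a m N j\<bar> * (ln (x + 1) ^ j / x powr (a + real N))"
    by (simp add: abs_mult mult_left_mono del: times_divide_eq_right)
qed

lemma log_power_Suc_expansion:
  assumes "a \<ge> 0" "p < a + real N" "N > 0"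
  shows "(\<lambda>n. log_power a m (real (Suc n)) - log_power a m (real n)
      - (\<Sum>i\<in>{1..<N}. \<Sum>j\<le>m. log_power_deriv_coeff a m i j / fact i * log_power (a + real i) j (real n)))
    \<in> O(\<lambda>n. (ln (real n) / real n) powr p)"
    (is "?remainder \<in> _")
proof -
  define K where "K n = (\<Sum>j\<le>m. \<bar>log_power_deriv_coeff a m N j\<bar> / fact N
      * (ln (real n + 1) ^ j / real n powr (a + real N)))" for n :: nat
  have "eventually (\<lambda>n. norm (?remainder n) \<le> 1 * norm (K n)) at_top"
    using eventually_ge_at_top[of 1]
  proof eventually_elim
    case (elim n)
    then have "real n \<ge> 1" by simp
    then obtain \<xi> where \<xi>: "real n < \<xi>" "\<xi> < real n + 1"
      and eq: "log_power a m (real n + 1) - log_power a m (real n)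
        = (\<Sum>i\<in>{1..<N}. log_power_deriv a m i (real n) / fact i) + log_power_deriv a m N \<xi> / fact N"
      using \<open>N > 0\<close> by (rule log_power_Suc_taylor)
    have "?remainder n = log_power_deriv a m N \<xi> / fact N"
      using eq by (simp add: add.commute log_power_deriv_def sum_divide_distrib)
    also have "\<bar>\<dots>\<bar> \<le> (\<Sum>j\<le>m. \<bar>log_power_deriv_coeff a m N j\<bar>
        * (ln (real n + 1) ^ j / real n powr (a + real N))) / fact N"
      using abs_log_power_deriv_le[of "real n" \<xi> a N m] \<open>real n \<ge> 1\<close> \<xi> \<open>a \<ge> 0\<close>
      by (simp add: divide_right_mono)
    also have "\<dots> = K n"
      unfolding K_def sum_divide_distrib by (simp add: mult.commute)
    finally show ?case by simp
  qed
  then have "?remainder \<in> O(K)" by (rule bigoI)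
  also have "K \<in> O(\<lambda>n. (ln (real n) / real n) powr p)"
    unfolding K_def using \<open>p < a + real N\<close> by (intro big_sum_in_bigo) real_asymp
  finally show ?thesis .
qed

section \<open>Coefficient recurrence for the expansion of a walk\<close>

lemma irrational_lin_comb_eq:
  assumes "\<rho> \<notin> \<rat>" "real k' * \<rho> + real l' = real k * \<rho> + real l"
  shows "k' = k \<and> l' = l"
proof -
  have "k' = k"
  proof (rule ccontr)
    assume "k' \<noteq> k"
    with assms(2) have "\<rho> = (real l - real l') / (real k' - real k)"
      by (simp add: field_simps)
    also have "\<dots> \<in> \<rat>" by simp
    finally show False using assms(1) by simp
  qed
  with assms(2) show ?thesis by simp
qed

locale lattice_walk_expansion =
  fixes S :: "(int \<times> int) set" and \<omega> :: "int \<times> int \<Rightarrow> real"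
    and tc \<rho> :: real
    and q :: "nat \<times> nat \<Rightarrow> nat \<Rightarrow> complex"
    and v :: "nat \<Rightarrow> nat \<Rightarrow> nat \<Rightarrow> nat \<times> nat \<Rightarrow> complex"
  assumes S_fin: "finite S"
    and tc_pos: "tc > 0"
    and \<rho>_pos: "\<rho> > 0"
    and \<rho>_irr: "\<rho> \<notin> \<rat>"
    and rec: "\<And>x n. q x (Suc n) =
        (\<Sum>s\<in>S. complex_of_real (\<omega> s) * zext (\<lambda>y. q y n) (int (fst x) - fst s, int (snd x) - snd s))"
    and asym: "\<And>p x. p > 0 \<Longrightarrow>
        (\<lambda>n. norm (q x n - complex_of_real (tc powr (- real n)) *
            (\<Sum>(k, l, m) \<in> {(k, l, m). 1 \<le> k \<and> m \<le> l \<and> real k * \<rho> + real l + 1 < p}.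
               v k l m x * complex_of_real (ln (real n) ^ m / real n powr (real k * \<rho> + real l + 1)))))
        \<in> O(\<lambda>n. tc powr (- real n) * (ln (real n) / real n) powr p)"
begin

definition expo :: "nat \<Rightarrow> nat \<Rightarrow> real" where
  "expo k l = real k * \<rho> + real l + 1"

definition expansion_terms :: "real \<Rightarrow> (nat \<times> nat \<times> nat) set" where
  "expansion_terms p = {(k, l, m). 1 \<le> k \<and> m \<le> l \<and> expo k l < p}"

definition partial_sum :: "real \<Rightarrow> nat \<times> nat \<Rightarrow> nat \<Rightarrow> complex" where
  "partial_sum p x n = (\<Sum>(k, l, m)\<in>expansion_terms p. v k l m x * of_real (log_power (expo k l) m (real n)))"

definition scaled_q :: "nat \<times> nat \<Rightarrow> nat \<Rightarrow> complex" where
  "scaled_q x n = of_real (tc powr real n) * q x n"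

lemma expo_pos: "expo k l > 0"
  unfolding expo_def using \<rho>_pos by (simp add: add_nonneg_pos)

lemma expo_plus_eq_expo_iff: "expo k' l' + real i = expo k l \<longleftrightarrow> k' = k \<and> l' + i = l"
  using irrational_lin_comb_eq[OF \<rho>_irr, of k' "l' + i" k l] unfolding expo_def by auto

lemma finite_expansion_terms: "finite (expansion_terms p)"
proof (rule finite_subset)
  show "expansion_terms p \<subseteq> {..nat \<lceil>p / \<rho>\<rceil>} \<times> {..nat \<lceil>p\<rceil>} \<times> {..nat \<lceil>p\<rceil>}"
  proof safe
    fix k l m assume "(k, l, m) \<in> expansion_terms p"
    then have "m \<le> l" "real k * \<rho> + real l + 1 < p" unfolding expansion_terms_def expo_def by auto
    moreover have "real k * \<rho> \<ge> 0" using \<rho>_pos by simp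
    ultimately have "real k * \<rho> < p" "real l < p" by linarith+
    then have "real k < p / \<rho>" "real l < p" using \<rho>_pos by (simp_all add: field_simps)
    with \<open>m \<le> l\<close> show "k \<le> nat \<lceil>p / \<rho>\<rceil>" "l \<le> nat \<lceil>p\<rceil>" "m \<le> nat \<lceil>p\<rceil>" by linarith+
  qed
qed simp

lemma negligible_expansion_remainder:
  assumes "p > 0"
  shows "negligible p (\<lambda>n. scaled_q x n - partial_sum p x n)"
proof -
  define h where "h n = q x n - of_real (tc powr (- real n)) * partial_sum p x n" for n
  have "(\<lambda>n. norm (h n)) \<in> O(\<lambda>n. tc powr (- real n) * (ln (real n) / real n) powr p)"
    using asym[OF assms, of x] unfolding h_def partial_sum_def expansion_terms_def expo_def log_power_def .
  then obtain c where c: "eventually (\<lambda>n. norm (h n) \<le> c * (tc powr (- real n) * (ln (real n) / real n) powr p)) at_top"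
    by (elim landau_o.bigE) auto
  have "scaled_q x n - partial_sum p x n = of_real (tc powr real n) * h n" for n
    using tc_pos by (simp add: scaled_q_def h_def algebra_simps powr_minus flip: of_real_mult)
  moreover have "eventually (\<lambda>n. norm (of_real (tc powr real n) * h n)
      \<le> c * norm (of_real ((ln (real n) / real n) powr p) :: complex)) at_top"
    using c
  proof eventually_elim
    case (elim n)
    have "norm (of_real (tc powr real n) * h n) \<le> tc powr real n * (c * (tc powr (- real n) * (ln (real n) / real n) powr p))"
      using elim tc_pos by (simp add: norm_mult mult_left_mono)
    also have "\<dots> = c * (ln (real n) / real n) powr p"
      using tc_pos by (simp add: powr_minus field_simps)
    finally show ?case by simp
  qed
  ultimately show ?thesis unfolding negligible_def by (intro bigoI) auto
qed

lemma scaled_q_Suc: "scaled_q x (Suc n) = of_real tc * Delta S \<omega> tc (\<lambda>y. scaled_q y n) x + scaled_q x n"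
proof -
  have "zext (\<lambda>y. scaled_q y n) A = of_real (tc powr real n) * zext (\<lambda>y. q y n) A" for A
    unfolding zext_def scaled_q_def by simp
  moreover have "tc powr real (Suc n) = tc * tc powr real n"
    using tc_pos by (simp add: powr_add)
  ultimately show ?thesis
    using tc_pos unfolding Delta_def scaled_q_def rec
    by (simp add: sum_distrib_left algebra_simps)
qed

lemma negligible_partial_sum_step:
  assumes "p > 0"
  shows "negligible p (\<lambda>n. partial_sum p x (Suc n) - partial_sum p x n
    - of_real tc * Delta S \<omega> tc (\<lambda>y. partial_sum p y n) x)"
proof -
  define R where "R y n = scaled_q y n - partial_sum p y n" for y n
  have R: "negligible p (R y)" for y
    unfolding R_def using assms by (rule negligible_expansion_remainder)
  have "Delta S \<omega> tc (\<lambda>y. scaled_q y n) x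
      = Delta S \<omega> tc (\<lambda>y. partial_sum p y n) x + Delta S \<omega> tc (\<lambda>y. R y n) x" for n
    unfolding Delta_add[symmetric] R_def by simp
  then have "partial_sum p x (Suc n) - partial_sum p x n - of_real tc * Delta S \<omega> tc (\<lambda>y. partial_sum p y n) x
      = of_real tc * Delta S \<omega> tc (\<lambda>y. R y n) x + R x n - R x (Suc n)" for n
    using scaled_q_Suc[of x n] unfolding R_def by (simp add: algebra_simps)
  moreover have "negligible p (\<lambda>n. of_real tc * Delta S \<omega> tc (\<lambda>y. R y n) x + R x n - R x (Suc n))"
    by (intro negligible_diff negligible_add negligible_cmult negligible_Delta negligible_Suc S_fin R assms)
  ultimately show ?thesis by simp
qed

lemma negligible_partial_sum_taylor:
  assumes "p < real N" "N > 0"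
  shows "negligible p (\<lambda>n. partial_sum p x (Suc n) - partial_sum p x n
    - (\<Sum>(k, l, m)\<in>expansion_terms p. v k l m x * of_real (\<Sum>i\<in>{1..<N}. \<Sum>j\<le>m.
        log_power_deriv_coeff (expo k l) m i j / fact i * log_power (expo k l + real i) j (real n))))"
proof -
  have "negligible p (\<lambda>n. v k l m x * of_real (log_power (expo k l) m (real (Suc n)) - log_power (expo k l) m (real n)
      - (\<Sum>i\<in>{1..<N}. \<Sum>j\<le>m. log_power_deriv_coeff (expo k l) m i j / fact i * log_power (expo k l + real i) j (real n))))"
    for k l m
    using assms expo_pos[of k l]
    by (intro negligible_cmult negligible_of_real log_power_Suc_expansion) auto
  then have "negligible p (\<lambda>n. \<Sum>(k, l, m)\<in>expansion_terms p. v k l m x * of_real (log_power (expo k l) m (real (Suc n))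
      - log_power (expo k l) m (real n) - (\<Sum>i\<in>{1..<N}. \<Sum>j\<le>m.
        log_power_deriv_coeff (expo k l) m i j / fact i * log_power (expo k l + real i) j (real n))))"
    by (intro negligible_sum) (simp add: split_def)
  moreover have "(\<Sum>(k, l, m)\<in>expansion_terms p. v k l m x * of_real (log_power (expo k l) m (real (Suc n))
      - log_power (expo k l) m (real n) - (\<Sum>i\<in>{1..<N}. \<Sum>j\<le>m.
        log_power_deriv_coeff (expo k l) m i j / fact i * log_power (expo k l + real i) j (real n))))
    = partial_sum p x (Suc n) - partial_sum p x n
    - (\<Sum>(k, l, m)\<in>expansion_terms p. v k l m x * of_real (\<Sum>i\<in>{1..<N}. \<Sum>j\<le>m.
        log_power_deriv_coeff (expo k l) m i j / fact i * log_power (expo k l + real i) j (real n)))" for n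
    unfolding partial_sum_def by (simp only: sum_subtractf[symmetric]) (simp add: split_def right_diff_distrib)
  ultimately show ?thesis by simp
qed

definition taylor_terms :: "real \<Rightarrow> nat \<Rightarrow> ((nat \<times> nat \<times> nat) \<times> nat \<times> nat) set" where
  "taylor_terms p N = Sigma (expansion_terms p) (\<lambda>(k, l, m). {1..<N} \<times> {..m})"

lemma finite_taylor_terms: "finite (taylor_terms p N)"
  unfolding taylor_terms_def using finite_expansion_terms by (intro finite_SigmaI) auto

lemma Delta_partial_sum:
  "Delta S \<omega> tc (\<lambda>y. partial_sum p y n) x
    = (\<Sum>(k, l, m)\<in>expansion_terms p. of_real (log_power (expo k l) m (real n)) * Delta S \<omega> tc (v k l m) x)"
proof -
  have "(\<lambda>y. partial_sum p y n) = (\<lambda>y. \<Sum>t\<in>expansion_terms p.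
      (case t of (k, l, m) \<Rightarrow> of_real (log_power (expo k l) m (real n))) * (case t of (k, l, m) \<Rightarrow> v k l m) y)"
    unfolding partial_sum_def by (simp add: split_def mult.commute)
  then show ?thesis by (simp add: Delta_sum split_def)
qed

lemma taylor_sum_reindex:
  "(\<Sum>(k, l, m)\<in>expansion_terms p. v k l m x * of_real (\<Sum>i\<in>{1..<N}. \<Sum>j\<le>m.
        log_power_deriv_coeff (expo k l) m i j / fact i * log_power (expo k l + real i) j t))
    = (\<Sum>((k, l, m), i, j)\<in>taylor_terms p N. v k l m x * of_real (log_power_deriv_coeff (expo k l) m i j / fact i)
        * of_real (log_power (expo k l + real i) j t))"
proof -
  have "(\<Sum>(k, l, m)\<in>expansion_terms p. v k l m x * of_real (\<Sum>i\<in>{1..<N}. \<Sum>j\<le>m.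
        log_power_deriv_coeff (expo k l) m i j / fact i * log_power (expo k l + real i) j t))
    = (\<Sum>(k, l, m)\<in>expansion_terms p. \<Sum>(i, j)\<in>{1..<N} \<times> {..m}. v k l m x
        * of_real (log_power_deriv_coeff (expo k l) m i j / fact i) * of_real (log_power (expo k l + real i) j t))"
    by (intro sum.cong refl)
      (auto simp: sum_distrib_left sum.cartesian_product split_def intro!: sum.cong)
  also have "\<dots> = (\<Sum>((k, l, m), i, j)\<in>taylor_terms p N. v k l m x
        * of_real (log_power_deriv_coeff (expo k l) m i j / fact i) * of_real (log_power (expo k l + real i) j t))"
    unfolding taylor_terms_def using finite_expansion_terms
    by (subst sum.Sigma[symmetric]) (auto simp: split_def)
  finally show ?thesis .
qed

lemma negligible_recurrence_expansion:
  assumes "p > 0" "p < real N"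
  shows "negligible p (\<lambda>n.
      (\<Sum>(k, l, m)\<in>expansion_terms p. - (of_real tc * Delta S \<omega> tc (v k l m) x) * of_real (log_power (expo k l) m (real n)))
    + (\<Sum>((k, l, m), i, j)\<in>taylor_terms p N. v k l m x * of_real (log_power_deriv_coeff (expo k l) m i j / fact i)
        * of_real (log_power (expo k l + real i) j (real n))))"
proof -
  have "N > 0" using assms by simp
  with assms have "negligible p (\<lambda>n. (partial_sum p x (Suc n) - partial_sum p x n
      - of_real tc * Delta S \<omega> tc (\<lambda>y. partial_sum p y n) x)
    - (partial_sum p x (Suc n) - partial_sum p x n
      - (\<Sum>(k, l, m)\<in>expansion_terms p. v k l m x * of_real (\<Sum>i\<in>{1..<N}. \<Sum>j\<le>m.
        log_power_deriv_coeff (expo k l) m i j / fact i * log_power (expo k l + real i) j (real n)))))"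
    by (intro negligible_diff negligible_partial_sum_step negligible_partial_sum_taylor)
  then show ?thesis
    unfolding Delta_partial_sum taylor_sum_reindex sum_distrib_left
    by (simp add: split_def sum_negf algebra_simps)
qed

definition lower_terms :: "nat \<Rightarrow> nat \<Rightarrow> nat \<Rightarrow> ((nat \<times> nat \<times> nat) \<times> nat \<times> nat) set" where
  "lower_terms k l m = {u\<in>taylor_terms (expo k l + 1) (nat \<lceil>expo k l + 1\<rceil> + 1).
      (\<lambda>((k', l', m'), i, j). expo k' l' + real i) u = expo k l \<and> (\<lambda>((k', l', m'), i, j). j) u = m}"

lemma finite_lower_terms: "finite (lower_terms k l m)"
  unfolding lower_terms_def using finite_taylor_terms by simp

lemma lower_termsD:
  assumes "((k', l', m'), i, j) \<in> lower_terms k l m"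
  shows "k' = k \<and> l' < l \<and> m \<le> m' \<and> m' \<le> l'"
  using assms expo_plus_eq_expo_iff[of k' l' i k l]
  unfolding lower_terms_def taylor_terms_def expansion_terms_def by auto

lemma Delta_v_eq_sum_lower_terms:
  assumes "1 \<le> k" "m \<le> l"
  shows "of_real tc * Delta S \<omega> tc (v k l m) x
    = (\<Sum>((k', l', m'), i, j)\<in>lower_terms k l m.
         v k' l' m' x * of_real (log_power_deriv_coeff (expo k' l') m' i j / fact i))"
proof -
  define p where "p = expo k l + 1"
  define N where "N = nat \<lceil>p\<rceil> + 1"
  have "p > 0" "p < real N" unfolding p_def N_def using expo_pos[of k l] by linarith+
  have "(\<Sum>t\<in>{t\<in>expansion_terms p. (\<lambda>(k', l', m'). expo k' l') t = expo k l \<and> (\<lambda>(k', l', m'). m') t = m}.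
        (\<lambda>(k', l', m'). - (of_real tc * Delta S \<omega> tc (v k' l' m') x)) t)
      + (\<Sum>u\<in>lower_terms k l m.
          (\<lambda>((k', l', m'), i, j). v k' l' m' x * of_real (log_power_deriv_coeff (expo k' l') m' i j / fact i)) u)
      = 0"
    unfolding lower_terms_def p_def[symmetric] N_def[symmetric]
    using finite_expansion_terms finite_taylor_terms
      negligible_recurrence_expansion[OF \<open>p > 0\<close> \<open>p < real N\<close>, of x]
    by (intro negligible_expansion_coeff_eq_0_Plus) (auto simp: split_def p_def)
  moreover have "{t\<in>expansion_terms p. (\<lambda>(k', l', m'). expo k' l') t = expo k l \<and> (\<lambda>(k', l', m'). m') t = m}
      = {(k, l, m)}"
    using expo_plus_eq_expo_iff[of _ _ 0 k l] assms unfolding expansion_terms_def p_def by auto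
  ultimately show ?thesis by (simp add: add_eq_0_iff)
qed

lemma Delta_v_lower_order:
  assumes "1 \<le> k" "m \<le> l"
  shows "\<exists>(U::((nat \<times> nat \<times> nat) \<times> nat \<times> nat) set) c L M. finite U
      \<and> (\<forall>u\<in>U. M u \<le> L u \<and> L u - M u < l - m)
      \<and> Delta S \<omega> tc (v k l m) = (\<lambda>x. \<Sum>u\<in>U. c u * v k (L u) (M u) x)"
proof -
  define c where "c = (\<lambda>((k', l', m'), i, j).
      of_real (log_power_deriv_coeff (expo k' l') m' i j / fact i) / (of_real tc :: complex))"
  define L where "L = (\<lambda>((k' :: nat, l' :: nat, m' :: nat), i :: nat, j :: nat). l')"
  define M where "M = (\<lambda>((k' :: nat, l' :: nat, m' :: nat), i :: nat, j :: nat). m')"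
  have "(of_real tc :: complex) \<noteq> 0" using tc_pos by simp
  have "of_real tc * Delta S \<omega> tc (v k l m) x
      = of_real tc * (\<Sum>u\<in>lower_terms k l m. c u * v k (L u) (M u) x)" for x
    unfolding Delta_v_eq_sum_lower_terms[OF assms] sum_distrib_left
  proof (intro sum.cong refl)
    fix u assume "u \<in> lower_terms k l m"
    moreover obtain k' l' m' i j where u: "u = ((k', l', m'), i, j)" by (cases u) auto
    ultimately have "k' = k" using lower_termsD by blast
    with u \<open>of_real tc \<noteq> 0\<close> show "(\<lambda>((k', l', m'), i, j).
        v k' l' m' x * of_real (log_power_deriv_coeff (expo k' l') m' i j / fact i)) u
      = of_real tc * (c u * v k (L u) (M u) x)"
      by (simp add: c_def L_def M_def)
  qed
  then have "Delta S \<omega> tc (v k l m) = (\<lambda>x. \<Sum>u\<in>lower_terms k l m. c u * v k (L u) (M u) x)"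
    using \<open>of_real tc \<noteq> 0\<close> by (simp add: fun_eq_iff)
  moreover have "\<forall>u\<in>lower_terms k l m. M u \<le> L u \<and> L u - M u < l - m"
  proof
    fix u assume "u \<in> lower_terms k l m"
    moreover obtain k' l' m' i j where u: "u = ((k', l', m'), i, j)" by (cases u) auto
    ultimately have "l' < l" "m \<le> m'" "m' \<le> l'" using lower_termsD by blast+
    then show "M u \<le> L u \<and> L u - M u < l - m" by (simp add: u L_def M_def)
  qed
  ultimately show ?thesis
    using finite_lower_terms by (intro exI[of _ "lower_terms k l m"] exI[of _ c] exI[of _ L] exI[of _ M]) simp
qed

end

theorem lemma4p5:
  fixes S :: "(int \<times> int) set" and \<omega> :: "int \<times> int \<Rightarrow> real"
    and tc \<rho> :: real
    and q :: "nat \<times> nat \<Rightarrow> nat \<Rightarrow> complex"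
    and v :: "nat \<Rightarrow> nat \<Rightarrow> nat \<Rightarrow> nat \<times> nat \<Rightarrow> complex"
  assumes S_fin: "finite S"
    and \<omega>_pos: "\<And>s. s \<in> S \<Longrightarrow> \<omega> s > 0"
    and tc_pos: "tc > 0"
    and \<rho>_pos: "\<rho> > 0"
    and \<rho>_irr: "\<rho> \<notin> \<rat>"
    and rec: "\<And>x n. q x (Suc n) =
        (\<Sum>s\<in>S. complex_of_real (\<omega> s) * zext (\<lambda>y. q y n) (int (fst x) - fst s, int (snd x) - snd s))"
    and asym: "\<And>p x. p > 0 \<Longrightarrow>
        (\<lambda>n. norm (q x n - complex_of_real (tc powr (- real n)) *
            (\<Sum>(k, l, m) \<in> {(k, l, m). 1 \<le> k \<and> m \<le> l \<and> real k * \<rho> + real l + 1 < p}.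
               v k l m x * complex_of_real (ln (real n) ^ m / real n powr (real k * \<rho> + real l + 1)))))
        \<in> O(\<lambda>n. tc powr (- real n) * (ln (real n) / real n) powr p)"
  shows "\<forall>k l m. 1 \<le> k \<longrightarrow> m \<le> l \<longrightarrow>
           ((Delta S \<omega> tc) ^^ (l - m + 1)) (v k l m) = (\<lambda>_. 0)"
proof (intro allI impI)
  interpret lattice_walk_expansion S \<omega> tc \<rho> q v
    using S_fin tc_pos \<rho>_pos \<rho>_irr rec asym by unfold_locales
  fix k l m :: nat
  assume "1 \<le> k" "m \<le> l"
  show "(Delta S \<omega> tc ^^ (l - m + 1)) (v k l m) = (\<lambda>_. 0)"
    by (rule funpow_Delta_eq_0_by_descent[where v = "v k", OF Delta_v_lower_order[OF \<open>1 \<le> k\<close>] \<open>m \<le> l\<close>])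
qed

end
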